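(* Let $A=(Q,\Sigma,\delta,q_0,F)$ be a nondeterministic finite automaton, and let $A'=(2^Q,\Sigma,\delta',\{q_0\},F')$ be the deterministic automaton obtained from $A$ by the powerset construction, i.e. $\delta'(P,a)=\bigcup_{p\in P}\delta(p,a)$ for $P\subseteq Q$, $a\in\Sigma$ (extended to words in the usual way), and $F'=\{P\subseteq Q\mid P\cap F\neq\emptyset\}$. Assume that the part of $A'$ reachable from $\{q_0\}$ is the minimal deterministic finite automaton equivalent to $A$, and that this automaton is not permutation-free. Suppose $n\ge 2$, that $P_0,P_1,\ldots,P_{n-1}\subseteq Q$ are pairwise distinct states of this automaton, and that a word $w\in\Sigma^*$ induces a non-trivial permutation on them, namely $\delta'(P_i,w)=P_{i+1}$ for $0\le i<n-1$ and $\delta'(P_{n-1},w)=P_0$. Then there are no two indices $i\neq j$ with $P_i\subseteq P_j$.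
   Context: A deterministic finite automaton is permutation-free if there is no word $w\in\Sigma^*$ that induces a non-trivial (i.e. non-identity) permutation of some subset of its set of states, where $w$ induces a permutation of a set $S$ of states if the map $q\mapsto \delta(q,w)$ restricts to a bijection of $S$. *)

theory Defs
  imports Main
begin

definition nfa_wf :: "'q set \<Rightarrow> 'a set \<Rightarrow> ('q \<Rightarrow> 'a \<Rightarrow> 'q set) \<Rightarrow> 'q \<Rightarrow> 'q set \<Rightarrow> bool" where
  "nfa_wf Q Sig delta q0 F \<longleftrightarrow> finite Q \<and> finite Sig \<and> q0 \<in> Q \<and> F \<subseteq> Q \<and>
     (\<forall>q\<in>Q. \<forall>a\<in>Sig. delta q a \<subseteq> Q)"

fun nfa_steps :: "('q \<Rightarrow> 'a \<Rightarrow> 'q set) \<Rightarrow> 'q \<Rightarrow> 'a list \<Rightarrow> 'q set" where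
  "nfa_steps delta q [] = {q}"
| "nfa_steps delta q (a # w) = (\<Union>p\<in>delta q a. nfa_steps delta p w)"

definition nfa_lang :: "'a set \<Rightarrow> ('q \<Rightarrow> 'a \<Rightarrow> 'q set) \<Rightarrow> 'q \<Rightarrow> 'q set \<Rightarrow> 'a list set" where
  "nfa_lang Sig delta q0 F = {w \<in> lists Sig. nfa_steps delta q0 w \<inter> F \<noteq> {}}"

definition pow_step :: "('q \<Rightarrow> 'a \<Rightarrow> 'q set) \<Rightarrow> 'q set \<Rightarrow> 'a \<Rightarrow> 'q set" where
  "pow_step delta P a = (\<Union>p\<in>P. delta p a)"

fun pow_hat :: "('q \<Rightarrow> 'a \<Rightarrow> 'q set) \<Rightarrow> 'q set \<Rightarrow> 'a list \<Rightarrow> 'q set" where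
  "pow_hat delta P [] = P"
| "pow_hat delta P (a # w) = pow_hat delta (pow_step delta P a) w"

definition pow_final :: "'q set \<Rightarrow> 'q set set" where
  "pow_final F = {P. P \<inter> F \<noteq> {}}"

definition pow_reach :: "'a set \<Rightarrow> ('q \<Rightarrow> 'a \<Rightarrow> 'q set) \<Rightarrow> 'q \<Rightarrow> 'q set set" where
  "pow_reach Sig delta q0 = {pow_hat delta {q0} w | w. w \<in> lists Sig}"

definition pow_lang :: "'a set \<Rightarrow> ('q \<Rightarrow> 'a \<Rightarrow> 'q set) \<Rightarrow> 'q \<Rightarrow> 'q set \<Rightarrow> 'a list set" where
  "pow_lang Sig delta q0 F = {w \<in> lists Sig. pow_hat delta {q0} w \<in> pow_final F}"

text \<open>General (complete) DFAs over alphabet Sig; states are natural numbers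
  (every finite DFA is isomorphic to one of this form).\<close>
definition dfa_wf :: "nat set \<Rightarrow> 'a set \<Rightarrow> (nat \<Rightarrow> 'a \<Rightarrow> nat) \<Rightarrow> nat \<Rightarrow> nat set \<Rightarrow> bool" where
  "dfa_wf S Sig t s0 Fd \<longleftrightarrow> finite S \<and> s0 \<in> S \<and> Fd \<subseteq> S \<and>
     (\<forall>s\<in>S. \<forall>a\<in>Sig. t s a \<in> S)"

definition dfa_lang :: "'a set \<Rightarrow> (nat \<Rightarrow> 'a \<Rightarrow> nat) \<Rightarrow> nat \<Rightarrow> nat set \<Rightarrow> 'a list set" where
  "dfa_lang Sig t s0 Fd = {w \<in> lists Sig. foldl t s0 w \<in> Fd}"

definition pow_is_minimal_dfa :: "'a set \<Rightarrow> ('q \<Rightarrow> 'a \<Rightarrow> 'q set) \<Rightarrow> 'q \<Rightarrow> 'q set \<Rightarrow> bool" where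
  "pow_is_minimal_dfa Sig delta q0 F \<longleftrightarrow>
     pow_lang Sig delta q0 F = nfa_lang Sig delta q0 F \<and>
     (\<forall>S t s0 Fd. dfa_wf S Sig t s0 Fd \<and> dfa_lang Sig t s0 Fd = nfa_lang Sig delta q0 F
        \<longrightarrow> card (pow_reach Sig delta q0) \<le> card S)"

definition pow_permutation_free :: "'a set \<Rightarrow> ('q \<Rightarrow> 'a \<Rightarrow> 'q set) \<Rightarrow> 'q \<Rightarrow> bool" where
  "pow_permutation_free Sig delta q0 \<longleftrightarrow>
     \<not> (\<exists>w\<in>lists Sig. \<exists>S \<subseteq> pow_reach Sig delta q0.
          bij_betw (\<lambda>P. pow_hat delta P w) S S \<and> (\<exists>P\<in>S. pow_hat delta P w \<noteq> P))"

end

theory Submission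
  imports Defs
begin

text \<open>The transition map \<open>X \<mapsto> \<delta>'(X, w)\<close> of the powerset automaton is monotone for
  inclusion, and \<open>w\<^sup>n\<close> fixes every \<open>P\<^sub>i\<close>. If \<open>P\<^sub>i \<subseteq> P\<^sub>j\<close> and \<open>P\<^sub>j = \<delta>'(P\<^sub>i, w\<^sup>d)\<close>,
  applying \<open>w\<^sup>d\<close> repeatedly gives \<open>P\<^sub>i \<subseteq> P\<^sub>j \<subseteq> \<delta>'(P\<^sub>i, w\<^sup>2\<^sup>d) \<subseteq> \<dots> \<subseteq> \<delta>'(P\<^sub>i, w\<^sup>n\<^sup>d) = P\<^sub>i\<close>,
  so \<open>P\<^sub>i = P\<^sub>j\<close>.\<close>

lemma mono_pow_hat: "mono (\<lambda>X. pow_hat delta X w)"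
proof (rule monoI)
  show "pow_hat delta X w \<subseteq> pow_hat delta Y w" if "X \<subseteq> Y" for X Y
    using that
  proof (induction w arbitrary: X Y)
    case (Cons a w)
    then have "pow_step delta X a \<subseteq> pow_step delta Y a"
      unfolding pow_step_def by blast
    with Cons.IH show ?case by simp
  qed simp
qed

lemma funpow_cycle:
  assumes "0 < n"
    and "\<forall>i. i + 1 < n \<longrightarrow> f (x i) = x (i + 1)"
    and "f (x (n - 1)) = x 0"
    and "i < n"
  shows "(f ^^ k) (x i) = x ((i + k) mod n)"
proof (induction k)
  case 0
  show ?case using \<open>i < n\<close> by simp
next
  case (Suc k)
  have step: "f (x m) = x (Suc m mod n)" if "m < n" for m
  proof (cases "Suc m < n")
    case True
    then show ?thesis using assms(2) by simp
  next
    case False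
    with that have "m = n - 1" "Suc m = n" by linarith+
    then show ?thesis using assms(3) by simp
  qed
  have "(f ^^ Suc k) (x i) = f (x ((i + k) mod n))" using Suc by simp
  also have "\<dots> = x (Suc ((i + k) mod n) mod n)" using \<open>0 < n\<close> by (simp add: step)
  also have "\<dots> = x ((i + Suc k) mod n)" by (simp add: mod_Suc_eq)
  finally show ?case .
qed

lemma mono_periodic_le_funpow_imp_eq:
  fixes f :: "'b::order \<Rightarrow> 'b"
  assumes "mono f" and "0 < n" and "(f ^^ n) x = x" and "x \<le> (f ^^ d) x"
  shows "(f ^^ d) x = x"
proof -
  have "(f ^^ (k * d)) x \<le> (f ^^ (Suc k * d)) x" for k
    using funpow_mono[OF \<open>mono f\<close> assms(4), of "k * d"]
    by (metis add.commute comp_apply funpow_add mult_Suc)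
  then have "(f ^^ (1 * d)) x \<le> (f ^^ (n * d)) x"
    by (rule lift_Suc_mono_le) (use \<open>0 < n\<close> in simp)
  also have "(f ^^ (n * d)) x = x"
  proof -
    have "((f ^^ n) ^^ d) x = x" by (induction d) (simp_all add: assms(3))
    then show ?thesis by (simp add: funpow_mult)
  qed
  finally show ?thesis using assms(4) by simp
qed

theorem mainTheorem1:
  fixes Q :: "'q set" and Sig :: "'a set" and delta :: "'q \<Rightarrow> 'a \<Rightarrow> 'q set"
    and q0 :: 'q and F :: "'q set" and n :: nat and P :: "nat \<Rightarrow> 'q set" and w :: "'a list"
  assumes "nfa_wf Q Sig delta q0 F"
    and "pow_is_minimal_dfa Sig delta q0 F"
    and "\<not> pow_permutation_free Sig delta q0"
    and "n \<ge> 2"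
    and "\<forall>i<n. P i \<in> pow_reach Sig delta q0"
    and "inj_on P {..<n}"
    and "w \<in> lists Sig"
    and "\<forall>i. i + 1 < n \<longrightarrow> pow_hat delta (P i) w = P (i + 1)"
    and "pow_hat delta (P (n - 1)) w = P 0"
  shows "\<not> (\<exists>i<n. \<exists>j<n. i \<noteq> j \<and> P i \<subseteq> P j)"
proof
  assume "\<exists>i<n. \<exists>j<n. i \<noteq> j \<and> P i \<subseteq> P j"
  then obtain i j where ij: "i < n" "j < n" "i \<noteq> j" "P i \<subseteq> P j" by blast
  define f where "f = (\<lambda>X. pow_hat delta X w)"
  have orbit: "(f ^^ k) (P i) = P ((i + k) mod n)" for k
    using funpow_cycle[of n f P i k] assms(4,8,9) ij(1) unfolding f_def by simp
  have "(f ^^ n) (P i) = P i" using orbit[of n] ij(1) by simp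
  moreover have "(f ^^ (j + n - i)) (P i) = P j" using orbit[of "j + n - i"] ij(1,2) by simp
  moreover have "0 < n" using assms(4) by simp
  ultimately have "P j = P i"
    using mono_periodic_le_funpow_imp_eq[OF mono_pow_hat[of delta w, folded f_def]] ij(4)
    by metis
  with assms(6) ij(1-3) show False by (auto simp: inj_on_def)
qed

end
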